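(* Let $r_1,r_2,r_3,L>0$ with $r_2>\max(r_1,r_3)$. For positive $a,b$ with $r_2>\max(a,b)$ let $m_{a,b}(y)=a\mathbf 1_{y<0}+r_2\mathbf 1_{0\le y<1}+b\mathbf 1_{y\ge1}$ and $\lambda_1(a,b)=\sup\{\lambda : \exists\,\varphi\in W^{2,1}_{\mathrm{loc}}(\mathbb{R}),\ \varphi>0,\ L^{-2}\varphi''+(m_{a,b}+\lambda)\varphi\le0\}$. Then $\lambda_1(r_1,r_3)=\lambda_1(r_3,r_1)$. *)

theory Defs
  imports "HOL-Analysis.Analysis"
begin

definition mcoef :: "real \<Rightarrow> real \<Rightarrow> real \<Rightarrow> real \<Rightarrow> real" where
  "mcoef r2 a b y = (if y < 0 then a else if y < 1 then r2 else b)"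

text \<open>phi belongs to W^{2,1}_loc(R) with (a.e.) second derivative phi2, described through
  its absolutely continuous representative: phi is differentiable everywhere with
  derivative phi1, phi2 is Lebesgue integrable on every compact interval, and phi1 is
  the indefinite integral of phi2 (so phi1 is locally absolutely continuous).\<close>
definition W21loc :: "(real \<Rightarrow> real) \<Rightarrow> (real \<Rightarrow> real) \<Rightarrow> bool" where
  "W21loc phi phi2 \<longleftrightarrow>
     (\<exists>phi1. (\<forall>x. (phi has_real_derivative phi1 x) (at x)) \<and>
        (\<forall>a b. a \<le> b \<longrightarrow> phi2 absolutely_integrable_on {a..b} \<and>
                 phi1 b - phi1 a = integral {a..b} phi2))"

definition lambda1 :: "real \<Rightarrow> real \<Rightarrow> real \<Rightarrow> real \<Rightarrow> ereal" where
  "lambda1 r2 L a b = Sup {ereal lam | lam. \<exists>phi phi2. W21loc phi phi2 \<and> (\<forall>y. phi y > 0) \<and>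
      (AE y in lborel. phi2 y / L^2 + (mcoef r2 a b y + lam) * phi y \<le> 0)}"

end

theory Submission
  imports Defs
begin

text \<open>The reflection \<open>y \<mapsto> 1 - y\<close> exchanges the two outer regions of the coefficient:
  \<open>mcoef r2 a b (1 - y) = mcoef r2 b a y\<close> for \<open>y \<notin> {0, 1}\<close>. Being an isometry of the
  line, it preserves local \<open>W\<^sup>2\<^sup>,\<^sup>1\<close> regularity, positivity, second derivatives and null
  sets, so it maps the positive supersolutions for \<open>(a, b)\<close> to those for \<open>(b, a)\<close> with the
  same \<open>\<lambda>\<close>.\<close>

lemma has_integral_reflect_around_real:
  fixes f :: "real \<Rightarrow> 'b::real_normed_vector"
  shows "((\<lambda>x. f (c - x)) has_integral i) {a..b} \<longleftrightarrow> (f has_integral i) {c - b..c - a}"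
proof -
  have "((\<lambda>x. f (c - x)) has_integral i) {a..b} \<longleftrightarrow> ((\<lambda>x. f (x + c)) has_integral i) {-b..-a}"
    using has_integral_reflect_real[of "\<lambda>x. f (x + c)" i "-a" "-b"] by simp
  also have "\<dots> \<longleftrightarrow> (f has_integral i) {c - b..c - a}"
    using has_integral_shift_real_ivl_iff[of f i "c - b" "c - a" c] by simp
  finally show ?thesis .
qed

lemma integrable_reflect_around_real:
  fixes f :: "real \<Rightarrow> 'b::real_normed_vector"
  shows "(\<lambda>x. f (c - x)) integrable_on {a..b} \<longleftrightarrow> f integrable_on {c - b..c - a}"
  unfolding integrable_on_def has_integral_reflect_around_real ..

lemma integral_reflect_around_real:
  fixes f :: "real \<Rightarrow> 'b::real_normed_vector"
  shows "integral {a..b} (\<lambda>x. f (c - x)) = integral {c - b..c - a} f"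
  by (metis has_integral_reflect_around_real integrable_reflect_around_real
      has_integral_integral integral_unique not_integrable_integral)

lemma absolutely_integrable_reflect_around_real:
  fixes f :: "real \<Rightarrow> 'b::euclidean_space"
  shows "(\<lambda>x. f (c - x)) absolutely_integrable_on {a..b} \<longleftrightarrow> f absolutely_integrable_on {c - b..c - a}"
  using integrable_reflect_around_real[of f c a b] integrable_reflect_around_real[of "\<lambda>x. norm (f x)" c a b]
  unfolding absolutely_integrable_on_def by simp

lemma AE_lborel_reflect:
  assumes "AE x in lborel. P x"
  shows "AE x in lborel. P (c - x :: real)"
proof -
  obtain N where N: "{x \<in> space lborel. \<not> P x} \<subseteq> N" "N \<in> sets lborel" "emeasure lborel N = 0"
    using assms by (rule AE_E)
  have "AE x in lborel. x \<notin> N"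
    using N(2,3) by (intro AE_not_in null_setsI)
  then have "AE x in lborel. c + (-1) * x \<notin> N"
    using N(2) by (intro AE_borel_affine) auto
  then show ?thesis
    by eventually_elim (use N(1) in auto)
qed

lemma W21loc_reflect:
  assumes "W21loc phi phi2"
  shows "W21loc (\<lambda>y. phi (c - y)) (\<lambda>y. phi2 (c - y))"
proof -
  obtain phi1 where deriv: "\<And>x. (phi has_real_derivative phi1 x) (at x)"
    and integral: "\<And>a b. a \<le> b \<Longrightarrow>
      phi2 absolutely_integrable_on {a..b} \<and> phi1 b - phi1 a = integral {a..b} phi2"
    using assms unfolding W21loc_def by blast
  show ?thesis
    unfolding W21loc_def
  proof (intro exI[of _ "\<lambda>x. - phi1 (c - x)"] conjI allI impI)
    fix x
    have "((\<lambda>y. c - y) has_real_derivative -1) (at x)"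
      by (auto intro!: derivative_eq_intros)
    from DERIV_chain2[OF deriv this]
    show "((\<lambda>y. phi (c - y)) has_real_derivative - phi1 (c - x)) (at x)"
      by simp
  next
    fix a b :: real
    assume "a \<le> b"
    then have "phi2 absolutely_integrable_on {c - b..c - a}"
      and "phi1 (c - a) - phi1 (c - b) = integral {c - b..c - a} phi2"
      using integral[of "c - b" "c - a"] by auto
    then show "(\<lambda>y. phi2 (c - y)) absolutely_integrable_on {a..b}"
      and "- phi1 (c - b) - - phi1 (c - a) = integral {a..b} (\<lambda>y. phi2 (c - y))"
      by (simp_all add: absolutely_integrable_reflect_around_real integral_reflect_around_real)
  qed
qed

lemma mcoef_reflect:
  assumes "y \<noteq> 0" "y \<noteq> 1"
  shows "mcoef r2 a b (1 - y) = mcoef r2 b a y"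
  using assms by (auto simp: mcoef_def)

lemma supersolution_reflect:
  assumes "W21loc phi phi2" "\<forall>y. phi y > 0"
    and "AE y in lborel. phi2 y / L^2 + (mcoef r2 a b y + lam) * phi y \<le> 0"
  shows "W21loc (\<lambda>y. phi (1 - y)) (\<lambda>y. phi2 (1 - y))" "\<forall>y. phi (1 - y) > 0"
    and "AE y in lborel. phi2 (1 - y) / L^2 + (mcoef r2 b a y + lam) * phi (1 - y) \<le> 0"
proof -
  show "W21loc (\<lambda>y. phi (1 - y)) (\<lambda>y. phi2 (1 - y))"
    using assms(1) by (rule W21loc_reflect)
  show "\<forall>y. phi (1 - y) > 0"
    using assms(2) by simp
  have "AE y in lborel. phi2 (1 - y) / L^2 + (mcoef r2 a b (1 - y) + lam) * phi (1 - y) \<le> 0"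
    using assms(3) by (rule AE_lborel_reflect)
  moreover have "AE y in lborel. y \<noteq> 0" "AE y in lborel. y \<noteq> 1"
    by (rule AE_lborel_singleton)+
  ultimately show "AE y in lborel. phi2 (1 - y) / L^2 + (mcoef r2 b a y + lam) * phi (1 - y) \<le> 0"
    by eventually_elim (simp add: mcoef_reflect)
qed

lemma lambda1_swap: "lambda1 r2 L a b = lambda1 r2 L b a"
proof -
  define admissible where "admissible a b = {ereal lam | lam. \<exists>phi phi2. W21loc phi phi2 \<and>
      (\<forall>y. phi y > 0) \<and> (AE y in lborel. phi2 y / L^2 + (mcoef r2 a b y + lam) * phi y \<le> 0)}"
    for a b
  have "admissible a b \<subseteq> admissible b a" for a b
  proof
    fix x
    assume "x \<in> admissible a b"
    then obtain lam phi phi2 where "x = ereal lam" "W21loc phi phi2" "\<forall>y. phi y > 0"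
      "AE y in lborel. phi2 y / L^2 + (mcoef r2 a b y + lam) * phi y \<le> 0"
      unfolding admissible_def by blast
    from supersolution_reflect[OF this(2-)] \<open>x = ereal lam\<close>
    show "x \<in> admissible b a"
      unfolding admissible_def by blast
  qed
  then have "admissible a b = admissible b a"
    by blast
  then show ?thesis
    unfolding lambda1_def admissible_def by simp
qed

theorem proposition4p3:
  fixes r1 r2 r3 L :: real
  assumes "r1 > 0" "r2 > 0" "r3 > 0" "L > 0" "r2 > max r1 r3"
  shows "lambda1 r2 L r1 r3 = lambda1 r2 L r3 r1"
  by (rule lambda1_swap)

end
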